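(* Let $K$ be a division ring, $G$ a group, and suppose nonzero elements $a,b\in K[G]$ satisfy $ab=0$ and both contain the identity element of $G$ in their supports. Then there is a subgroup $H$ of $G$ such that, letting $c=E^G_H(a)$ and $d=E^G_H(b)$: (i) $cd=0$; (ii) $c\ne0$ and $d\ne0$; (iii) the support of $c$ generates $H$; (iv) the support of $d$ generates $H$.
   Context: $K[G]$ is the group ring; the support of an element is the set of group elements with nonzero coefficient. For a subgroup $H\le G$, $E^G_H:K[G]\to K[H]$ is the $K$-linear map with $E^G_H(g)=g$ for $g\in H$ and $E^G_H(g)=0$ for $g\notin H$. *)

theory Defs
  imports "HOL-Algebra.Generated_Groups"
begin

definition gsupp :: "('g \<Rightarrow> 'k::zero) \<Rightarrow> 'g set" where
  "gsupp a = {x. a x \<noteq> 0}"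

definition group_ring :: "('g, 'm) monoid_scheme \<Rightarrow> ('g \<Rightarrow> 'k::zero) set" where
  "group_ring G = {a. finite (gsupp a) \<and> gsupp a \<subseteq> carrier G}"

definition gr_mult :: "('g, 'm) monoid_scheme \<Rightarrow> ('g \<Rightarrow> 'k::ring) \<Rightarrow> ('g \<Rightarrow> 'k) \<Rightarrow> ('g \<Rightarrow> 'k)" where
  "gr_mult G a b = (\<lambda>z. \<Sum>p\<in>{p \<in> gsupp a \<times> gsupp b. fst p \<otimes>\<^bsub>G\<^esub> snd p = z}.
                         a (fst p) * b (snd p))"

definition proj_sub :: "'g set \<Rightarrow> ('g \<Rightarrow> 'k::zero) \<Rightarrow> ('g \<Rightarrow> 'k)" where
  "proj_sub H a = (\<lambda>g. if g \<in> H then a g else 0)"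

end

theory Submission
  imports Defs
begin

text \<open>Among the subgroups \<open>H\<close> with \<open>E_H(a) E_H(b) = 0\<close> (such as \<open>G\<close> itself) choose one
  meeting \<open>supp a \<union> supp b\<close> in as few elements as possible. If \<open>L \<le> H\<close> contains the whole
  support of \<open>E_H(a)\<close> or of \<open>E_H(b)\<close>, then \<open>E_L\<close> is multiplicative on this pair, so
  \<open>E_L(a) E_L(b) = E_L(E_H(a) E_H(b)) = 0\<close>; by minimality \<open>L\<close> meets both supports exactly as
  \<open>H\<close> does. Taking \<open>L\<close> generated by \<open>supp a \<inter> H\<close>, and then comparing with the subgroup
  generated by \<open>supp b \<inter> L\<close>, yields a subgroup generated by either support. The identity
  lies in every subgroup, which keeps both projections nonzero.\<close>

definition annihilating_subgroup ::
    "('g, 'm) monoid_scheme \<Rightarrow> ('g \<Rightarrow> 'k::ring) \<Rightarrow> ('g \<Rightarrow> 'k) \<Rightarrow> 'g set \<Rightarrow> bool" where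
  "annihilating_subgroup G a b H \<longleftrightarrow>
     subgroup H G \<and> gr_mult G (proj_sub H a) (proj_sub H b) = (\<lambda>_. 0)"

lemma gsupp_proj_sub: "gsupp (proj_sub H a) = gsupp a \<inter> H"
  by (auto simp: gsupp_def proj_sub_def)

lemma proj_sub_proj_sub: "L \<subseteq> H \<Longrightarrow> proj_sub L (proj_sub H a) = proj_sub L a"
  by (auto simp: proj_sub_def fun_eq_iff)

lemma proj_sub_eq_self: "gsupp a \<subseteq> H \<Longrightarrow> proj_sub H a = a"
  by (auto simp: proj_sub_def gsupp_def fun_eq_iff)

lemma proj_sub_neq_zero: "x \<in> gsupp a \<Longrightarrow> x \<in> H \<Longrightarrow> proj_sub H a \<noteq> (\<lambda>_. 0)"
  by (auto simp: gsupp_def proj_sub_def fun_eq_iff)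

lemma (in group) subgroup_mult_mem_iff:
  assumes "subgroup L G" "x \<in> carrier G" "y \<in> carrier G" "x \<otimes> y \<in> L"
  shows "x \<in> L \<longleftrightarrow> y \<in> L"
proof -
  have "y = inv x \<otimes> (x \<otimes> y)" and "x = (x \<otimes> y) \<otimes> inv y"
    using assms(2,3) by (simp_all add: inv_solve_left inv_solve_right)
  then show ?thesis
    using assms(1,4) by (metis subgroup.m_closed subgroup.m_inv_closed)
qed

text \<open>When \<open>L\<close> contains the support of one factor, a product \<open>x y\<close> of support elements
  lies in \<open>L\<close> only if both \<open>x\<close> and \<open>y\<close> do.\<close>

lemma proj_sub_gr_mult:
  fixes c d :: "'g \<Rightarrow> 'k::ring"
  assumes "group G" and L: "subgroup L G"
    and "gsupp c \<subseteq> carrier G" "gsupp d \<subseteq> carrier G"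
    and "gsupp c \<subseteq> L \<or> gsupp d \<subseteq> L"
  shows "gr_mult G (proj_sub L c) (proj_sub L d) = proj_sub L (gr_mult G c d)"
proof
  interpret group G by fact
  fix z
  let ?pairs = "\<lambda>c d. {p \<in> gsupp c \<times> gsupp d. fst p \<otimes>\<^bsub>G\<^esub> snd p = z}"
  show "gr_mult G (proj_sub L c) (proj_sub L d) z = proj_sub L (gr_mult G c d) z"
  proof (cases "z \<in> L")
    case True
    have in_L: "p \<in> L \<times> L" if "p \<in> ?pairs c d" for p
    proof (cases p)
      case (Pair x y)
      with that assms(3,4) have "x \<in> carrier G" "y \<in> carrier G" "x \<otimes>\<^bsub>G\<^esub> y = z"
        by auto
      with True have "x \<in> L \<longleftrightarrow> y \<in> L"
        using subgroup_mult_mem_iff[OF L] by blast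
      with Pair that assms(5) show ?thesis
        by auto
    qed
    then have pairs: "?pairs (proj_sub L c) (proj_sub L d) = ?pairs c d"
      by (auto simp: gsupp_proj_sub)
    have "gr_mult G (proj_sub L c) (proj_sub L d) z = (\<Sum>p\<in>?pairs c d. c (fst p) * d (snd p))"
      unfolding gr_mult_def pairs
    proof (rule sum.cong[OF refl])
      fix p assume "p \<in> ?pairs c d"
      then show "proj_sub L c (fst p) * proj_sub L d (snd p) = c (fst p) * d (snd p)"
        using in_L by (auto simp: proj_sub_def)
    qed
    then show ?thesis
      using True by (simp add: gr_mult_def proj_sub_def)
  next
    case False
    then have no_pairs: "?pairs (proj_sub L c) (proj_sub L d) = {}"
      using L by (auto simp: gsupp_proj_sub subgroup.m_closed)
    have "gr_mult G (proj_sub L c) (proj_sub L d) z = 0"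
      unfolding gr_mult_def no_pairs by simp
    with False show ?thesis
      by (simp add: proj_sub_def)
  qed
qed

lemma annihilating_subgroup_mono:
  fixes a b :: "'g \<Rightarrow> 'k::ring"
  assumes "group G" "gsupp a \<subseteq> carrier G" "gsupp b \<subseteq> carrier G"
    and H: "annihilating_subgroup G a b H"
    and "subgroup L G" "L \<subseteq> H" "gsupp a \<inter> H \<subseteq> L \<or> gsupp b \<inter> H \<subseteq> L"
  shows "annihilating_subgroup G a b L"
proof -
  have "gr_mult G (proj_sub L a) (proj_sub L b)
      = gr_mult G (proj_sub L (proj_sub H a)) (proj_sub L (proj_sub H b))"
    using \<open>L \<subseteq> H\<close> by (simp add: proj_sub_proj_sub)
  also have "\<dots> = proj_sub L (gr_mult G (proj_sub H a) (proj_sub H b))"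
    using assms by (intro proj_sub_gr_mult) (auto simp: gsupp_proj_sub)
  also have "\<dots> = (\<lambda>_. 0)"
    using H by (simp add: annihilating_subgroup_def proj_sub_def)
  finally show ?thesis
    using \<open>subgroup L G\<close> by (simp add: annihilating_subgroup_def)
qed

lemma obtain_inter_minimal:
  assumes "finite A" "P H\<^sub>0"
  obtains H where "P H" "\<And>H'. P H' \<Longrightarrow> H' \<subseteq> H \<Longrightarrow> A \<inter> H' = A \<inter> H"
proof -
  obtain H where "P H" and least: "\<And>H'. P H' \<Longrightarrow> card (A \<inter> H) \<le> card (A \<inter> H')"
    using ex_has_least_nat[of P H\<^sub>0 "\<lambda>H. card (A \<inter> H)"] \<open>P H\<^sub>0\<close> by blast
  have "A \<inter> H' = A \<inter> H" if "P H'" "H' \<subseteq> H" for H'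
  proof (rule card_subset_eq)
    show "A \<inter> H' \<subseteq> A \<inter> H"
      using \<open>H' \<subseteq> H\<close> by blast
    then show "card (A \<inter> H') = card (A \<inter> H)"
      using least[OF \<open>P H'\<close>] \<open>finite A\<close> by (simp add: card_mono le_antisym)
  qed (use \<open>finite A\<close> in simp)
  with \<open>P H\<close> show thesis
    using that by blast
qed

lemma annihilating_subgroup_generated_by_supports:
  fixes a b :: "'g \<Rightarrow> 'k::ring"
  assumes G: "group G" and supp: "gsupp a \<subseteq> carrier G" "gsupp b \<subseteq> carrier G"
    and H: "annihilating_subgroup G a b H"
    and min: "\<And>H'. annihilating_subgroup G a b H' \<Longrightarrow> H' \<subseteq> H \<Longrightarrow>
                (gsupp a \<union> gsupp b) \<inter> H' = (gsupp a \<union> gsupp b) \<inter> H"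
  obtains L where "annihilating_subgroup G a b L"
    "generate G (gsupp a \<inter> L) = L" "generate G (gsupp b \<inter> L) = L"
proof -
  interpret group G by fact
  have reduce: "annihilating_subgroup G a b L' \<and> gsupp a \<inter> L' = gsupp a \<inter> H
      \<and> gsupp b \<inter> L' = gsupp b \<inter> H"
    if "L' = generate G (S \<inter> H)" "S = gsupp a \<or> S = gsupp b" for S L'
  proof -
    have "subgroup H G"
      using H by (simp add: annihilating_subgroup_def)
    then have "subgroup L' G" "L' \<subseteq> H" "S \<inter> H \<subseteq> L'"
      using that supp generate_subgroup_incl[of "S \<inter> H" H]
      by (auto intro: generate_is_subgroup generate.incl)
    then have "annihilating_subgroup G a b L'"
      using that by (intro annihilating_subgroup_mono[OF G supp H]) auto
    with min[OF this \<open>L' \<subseteq> H\<close>] show ?thesis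
      by blast
  qed
  define L where "L = generate G (gsupp a \<inter> H)"
  define M where "M = generate G (gsupp b \<inter> H)"
  have L: "annihilating_subgroup G a b L" "gsupp a \<inter> L = gsupp a \<inter> H" "gsupp b \<inter> L = gsupp b \<inter> H"
    using reduce[OF L_def] by auto
  have M: "annihilating_subgroup G a b M" "gsupp a \<inter> M = gsupp a \<inter> H"
    using reduce[OF M_def] by auto
  have "M \<subseteq> L"
    unfolding M_def using L by (intro generate_subgroup_incl) (auto simp: annihilating_subgroup_def)
  moreover have "L \<subseteq> M"
    unfolding L_def using M by (intro generate_subgroup_incl) (auto simp: annihilating_subgroup_def)
  ultimately have "generate G (gsupp b \<inter> L) = L"
    using L(3) M_def by simp
  with L show thesis
    using L_def that by simp
qed

theorem proposition2p7:
  fixes G :: "('g, 'm) monoid_scheme" and a b :: "'g \<Rightarrow> 'k::division_ring"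
  assumes "group G"
    and "a \<in> group_ring G" and "b \<in> group_ring G"
    and "a \<noteq> (\<lambda>_. 0)" and "b \<noteq> (\<lambda>_. 0)"
    and "gr_mult G a b = (\<lambda>_. 0)"
    and "\<one>\<^bsub>G\<^esub> \<in> gsupp a" and "\<one>\<^bsub>G\<^esub> \<in> gsupp b"
  shows "\<exists>H. subgroup H G \<and>
           (let c = proj_sub H a; d = proj_sub H b in
              gr_mult G c d = (\<lambda>_. 0) \<and>
              c \<noteq> (\<lambda>_. 0) \<and> d \<noteq> (\<lambda>_. 0) \<and>
              generate G (gsupp c) = H \<and>
              generate G (gsupp d) = H)"
proof -
  have supp: "gsupp a \<subseteq> carrier G" "gsupp b \<subseteq> carrier G"
    and fin: "finite (gsupp a \<union> gsupp b)"
    using assms(2,3) by (auto simp: group_ring_def)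
  have "annihilating_subgroup G a b (carrier G)"
    using assms(1,6) supp by (simp add: annihilating_subgroup_def proj_sub_eq_self group.subgroup_self)
  then obtain H where "annihilating_subgroup G a b H"
    "\<And>H'. annihilating_subgroup G a b H' \<Longrightarrow> H' \<subseteq> H \<Longrightarrow>
       (gsupp a \<union> gsupp b) \<inter> H' = (gsupp a \<union> gsupp b) \<inter> H"
    by (rule obtain_inter_minimal[OF fin]) blast
  then obtain L where L: "annihilating_subgroup G a b L"
    "generate G (gsupp a \<inter> L) = L" "generate G (gsupp b \<inter> L) = L"
    by (rule annihilating_subgroup_generated_by_supports[OF assms(1) supp]) blast+
  then have "\<one>\<^bsub>G\<^esub> \<in> L"
    by (simp add: annihilating_subgroup_def subgroup.one_closed)
  then have "proj_sub L a \<noteq> (\<lambda>_. 0)" "proj_sub L b \<noteq> (\<lambda>_. 0)"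
    using assms(7,8) by (simp_all add: proj_sub_neq_zero)
  with L show ?thesis
    unfolding Let_def gsupp_proj_sub annihilating_subgroup_def by (intro exI[of _ L]) simp
qed

end
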